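(* Let $q$ be a prime power, $s\ge 2$ an integer, $v=2s$, and let $V$ be a $v$-dimensional vector space over $\mathrm{GF}(q)$. Let $\mathcal{G}$ be a Desarguesian $1$-spread of $V$. Let $L$ be a $2$-dimensional subspace of $V$ not contained in any element of $\mathcal{G}$. Then the number of $4$-dimensional subspaces of $V$ containing $L$ that are scattered with respect to $\mathcal{G}$ equals \[ \lambda_{\max}=\begin{bmatrix} v-2\\ 2\end{bmatrix}_q-1-q\begin{bmatrix} 2\\ 1\end{bmatrix}_q\begin{bmatrix} v-4\\ 1\end{bmatrix}_q-\begin{bmatrix} v\\ 1\end{bmatrix}_q\Big/\begin{bmatrix} 2\\ 1\end{bmatrix}_q+\begin{bmatrix} 4\\ 1\end{bmatrix}_q\Big/\begin{bmatrix} 2\\ 1\end{bmatrix}_q . \]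
   Context: For integers $0\le m\le n$, $\begin{bmatrix} n\\ m\end{bmatrix}_q=\prod_{i=0}^{m-1}\frac{q^{n-i}-1}{q^{m-i}-1}$ is the Gaussian coefficient. A $1$-spread of $V$ is a set of $2$-dimensional subspaces of $V$ such that every $1$-dimensional subspace of $V$ lies in exactly one of them. The Desarguesian $1$-spread of $\mathrm{GF}(q^2)^s$, viewed as a $2s$-dimensional $\mathrm{GF}(q)$-vector space, is the set of all $1$-dimensional $\mathrm{GF}(q^2)$-subspaces of $\mathrm{GF}(q^2)^s$ (each being a $2$-dimensional $\mathrm{GF}(q)$-subspace); a $1$-spread of $V$ is Desarguesian if it is the image of this spread under some $\mathrm{GF}(q)$-linear isomorphism $\mathrm{GF}(q^2)^s\to V$. A subspace $B\le V$ is scattered with respect to $\mathcal{G}$ if $B$ contains no $2$-dimensional subspace contained in an element of $\mathcal{G}$ (equivalently, $\dim(B\cap S)\le 1$ for all $S\in\mathcal{G}$). *)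

theory Defs
  imports Complex_Main "HOL-Library.Function_Algebras" "HOL-Library.Cardinality"
begin

definition gauss_coeff :: "nat \<Rightarrow> nat \<Rightarrow> nat \<Rightarrow> real" where
  "gauss_coeff q n m = (\<Prod>i<m. (real q ^ (n - i) - 1) / (real q ^ (m - i) - 1))"

definition subspaces_of_dim :: "('a::field \<Rightarrow> 'v::ab_group_add \<Rightarrow> 'v) \<Rightarrow> nat \<Rightarrow> 'v set set" where
  "subspaces_of_dim scale k = {S. module.subspace scale S \<and> vector_space.dim scale S = k}"

definition is_1_spread :: "('a::field \<Rightarrow> 'v::ab_group_add \<Rightarrow> 'v) \<Rightarrow> 'v set set \<Rightarrow> bool" where
  "is_1_spread scale G \<longleftrightarrow> G \<subseteq> subspaces_of_dim scale 2 \<and>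
     (\<forall>P \<in> subspaces_of_dim scale 1. \<exists>!S. S \<in> G \<and> P \<subseteq> S)"

definition field_emb :: "('a::field \<Rightarrow> 'b::field) \<Rightarrow> bool" where
  "field_emb phi \<longleftrightarrow> inj phi \<and> phi 1 = 1 \<and>
     (\<forall>x y. phi (x + y) = phi x + phi y) \<and> (\<forall>x y. phi (x * y) = phi x * phi y)"

text \<open>GF(q^2)^s (vectors indexed by the finite type 's) viewed as GF(q)-space via phi.\<close>
definition restr_scale :: "('a::field \<Rightarrow> 'b::field) \<Rightarrow> 'a \<Rightarrow> ('s \<Rightarrow> 'b) \<Rightarrow> ('s \<Rightarrow> 'b)" where
  "restr_scale phi c x = (\<lambda>i. phi c * x i)"

text \<open>The Desarguesian 1-spread: all 1-dimensional GF(q^2)-subspaces of GF(q^2)^s.\<close>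
definition desarg_spread_std :: "('s \<Rightarrow> 'b::field) set set" where
  "desarg_spread_std = {range (\<lambda>a::'b. (\<lambda>i. a * x i)) | x. x \<noteq> 0}"

definition is_desarguesian_spread ::
  "('a::field \<Rightarrow> 'b::field) \<Rightarrow> 's itself \<Rightarrow> ('a \<Rightarrow> 'v::ab_group_add \<Rightarrow> 'v) \<Rightarrow> 'v set set \<Rightarrow> bool" where
  "is_desarguesian_spread phi (_::'s itself) scale G \<longleftrightarrow>
     (\<exists>f :: ('s \<Rightarrow> 'b) \<Rightarrow> 'v. Vector_Spaces.linear (restr_scale phi) scale f \<and> bij f \<and>
        G = (\<lambda>P. f ` P) ` (desarg_spread_std :: ('s \<Rightarrow> 'b) set set))"

definition scattered :: "('a::field \<Rightarrow> 'v::ab_group_add \<Rightarrow> 'v) \<Rightarrow> 'v set set \<Rightarrow> 'v set \<Rightarrow> bool" where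
  "scattered scale G B \<longleftrightarrow>
     \<not> (\<exists>W \<in> subspaces_of_dim scale 2. W \<subseteq> B \<and> (\<exists>S \<in> G. W \<subseteq> S))"

end

theory Submission
  imports Defs
begin

(* Let M be the GF(q^2)-span of L; it is a 4-space through L.  A 4-space containing two
   distinct spread elements is their sum, hence closed under GF(q^2), so M is the only 4-space
   through L containing two spread elements.  The non-scattered 4-spaces through L other than M
   are therefore partitioned by the spread element S they contain.  If S meets L, which happens
   for the q + 1 spread elements through the points of L, then S + L is a 3-space, lying in
   [v-3,1] 4-spaces, one of them M.  If S misses L, then S + L is the unique 4-space through L
   and S, and it equals M exactly when S lies in M.  Counting spread elements as GF(q^2)-points,
   there are [v,1]/[2,1] of them in V and [4,1]/[2,1] in M; subtracting all of this from the
   [v-2,2] 4-spaces through L gives the formula. *)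

lemma card_eq_mult_card_if_fibres:
  assumes "finite X" "finite Y" "f ` X \<subseteq> Y" "\<And>y. y \<in> Y \<Longrightarrow> card {x\<in>X. f x = y} = k"
  shows "card X = k * card Y"
proof -
  have "X = (\<Union>y\<in>Y. {x\<in>X. f x = y})"
    using assms(3) by auto
  also have "card \<dots> = (\<Sum>y\<in>Y. card {x\<in>X. f x = y})"
    by (rule card_UN_disjoint) (use assms(1,2) in auto)
  finally show ?thesis
    using assms(4) by simp
qed

lemma sum_card_incidences_swap:
  assumes "finite X" "finite Y"
  shows "(\<Sum>x\<in>X. card {y\<in>Y. R x y}) = (\<Sum>y\<in>Y. card {x\<in>X. R x y})"
proof -
  have count: "card {a\<in>A. P a} = (\<Sum>a\<in>A. if P a then 1 else 0)" if "finite A" for A and P :: "'c \<Rightarrow> bool"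
    using sum.inter_filter[OF that, of "\<lambda>_. 1 :: nat" P] by simp
  have "(\<Sum>x\<in>X. card {y\<in>Y. R x y}) = (\<Sum>x\<in>X. \<Sum>y\<in>Y. if R x y then 1 else 0)"
    using count[OF assms(2)] by simp
  also have "\<dots> = (\<Sum>y\<in>Y. \<Sum>x\<in>X. if R x y then 1 else 0)"
    by (rule sum.swap)
  also have "\<dots> = (\<Sum>y\<in>Y. card {x\<in>X. R x y})"
    using count[OF assms(1)] by simp
  finally show ?thesis .
qed

lemma vector_space_transport:
  fixes sc :: "'a::field \<Rightarrow> 'u::ab_group_add \<Rightarrow> 'u" and f :: "'u \<Rightarrow> 'v::ab_group_add"
  assumes "vector_space sc" "bij f" "\<And>x y. f (x + y) = f x + f y"
  shows "vector_space (\<lambda>c w. f (sc c (inv f w)))"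
proof -
  interpret vector_space sc
    by fact
  have f_inv_f: "f (inv f w) = w" and inv_f_f: "inv f (f x) = x" for w x
    using assms(2) by (simp_all add: bij_is_surj surj_f_inv_f bij_is_inj)
  have inv_add: "inv f (w + w') = inv f w + inv f w'" for w w'
    by (metis assms(3) f_inv_f inv_f_f)
  show ?thesis
    by unfold_locales (simp_all add: assms(3) inv_add f_inv_f inv_f_f scale_right_distrib scale_left_distrib)
qed

lemma image_desarg_spread_std:
  fixes f :: "('s \<Rightarrow> 'b::field) \<Rightarrow> 'v::ab_group_add"
  assumes "bij f" "\<And>x y. f (x + y) = f x + f y"
  shows "(\<lambda>P. f ` P) ` desarg_spread_std = {range (\<lambda>c. f (\<lambda>i. c * inv f w i)) | w. w \<noteq> 0}"
proof -
  have f_inv_f: "f (inv f w) = w" and inv_f_f: "inv f (f x) = x" for w x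
    using assms(1) by (simp_all add: bij_is_surj surj_f_inv_f bij_is_inj)
  have "f 0 = 0"
    using assms(2)[of 0 0] by simp
  then have f_eq_0: "f x = 0 \<longleftrightarrow> x = 0" for x
    using inv_f_f by metis
  have f_nonzero: "f ` {x. x \<noteq> 0} = {w :: 'v. w \<noteq> 0}"
  proof (intro equalityI subsetI)
    fix w :: 'v
    assume "w \<in> {w. w \<noteq> 0}"
    then have "inv f w \<noteq> 0"
      using f_eq_0[of "inv f w"] f_inv_f by simp
    then show "w \<in> f ` {x. x \<noteq> 0}"
      by (intro image_eqI[of _ _ "inv f w"]) (simp_all add: f_inv_f)
  qed (use f_eq_0 in auto)
  have "(\<lambda>P. f ` P) ` desarg_spread_std = (\<lambda>x. range (\<lambda>c. f (\<lambda>i. c * inv f (f x) i))) ` {x. x \<noteq> 0}"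
    unfolding desarg_spread_std_def setcompr_eq_image image_image by (simp add: inv_f_f image_image)
  also have "\<dots> = {range (\<lambda>c. f (\<lambda>i. c * inv f w i)) | w. w \<noteq> 0}"
    unfolding setcompr_eq_image f_nonzero[symmetric] image_image ..
  finally show ?thesis .
qed

lemma gauss_coeff_1: "gauss_coeff q m 1 = (real q ^ m - 1) / (real q - 1)"
  by (simp add: gauss_coeff_def)

lemma gauss_coeff_2_1: "q \<noteq> 1 \<Longrightarrow> gauss_coeff q 2 1 = real q + 1"
  unfolding gauss_coeff_1 by (simp add: power2_eq_square field_simps)

lemma gauss_coeff_Suc_1: "q \<noteq> 1 \<Longrightarrow> gauss_coeff q (Suc m) 1 = real q * gauss_coeff q m 1 + 1"
  unfolding gauss_coeff_1 by (simp add: field_simps)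

lemma gauss_coeff_1_eq_power_quotient:
  assumes "2 \<le> q" "u \<le> a"
  shows "gauss_coeff q (a - u) 1 = (real q ^ a - real q ^ u) / (real q ^ (u + 1) - real q ^ u)"
proof -
  have "real q ^ a = real q ^ u * real q ^ (a - u)"
    using assms(2) by (simp flip: power_add)
  moreover have "real q ^ u > 0" "real q - 1 > 0"
    using assms(1) by auto
  ultimately show ?thesis
    unfolding gauss_coeff_1 by (simp add: field_simps)
qed

lemma gauss_coeff_2:
  assumes "q \<noteq> 1"
  shows "gauss_coeff q m 2 * gauss_coeff q 2 1 = gauss_coeff q m 1 * gauss_coeff q (m - 1) 1"
proof -
  have "real q - 1 \<noteq> 0" "real q + 1 \<noteq> 0"
    using assms by auto
  moreover have "real q ^ 2 - 1 = (real q - 1) * (real q + 1)"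
    by (simp add: power2_eq_square algebra_simps)
  ultimately show ?thesis
    unfolding gauss_coeff_2_1[OF assms] gauss_coeff_1
    by (simp add: gauss_coeff_def numeral_2_eq_2 lessThan_Suc)
qed

lemma gauss_coeff_square_base:
  assumes "q \<noteq> 1"
  shows "gauss_coeff (q ^ 2) m 1 = gauss_coeff q (2 * m) 1 / gauss_coeff q 2 1"
proof -
  have "real q - 1 \<noteq> 0" "real q + 1 \<noteq> 0"
    using assms by auto
  moreover have "real q ^ 2 - 1 = (real q - 1) * (real q + 1)"
    by (simp add: power2_eq_square algebra_simps)
  ultimately show ?thesis
    unfolding gauss_coeff_2_1[OF assms] gauss_coeff_1 by (simp add: power_mult)
qed

locale finite_vector_space = vector_space scale
  for scale :: "'a::{finite,field} \<Rightarrow> 'v::ab_group_add \<Rightarrow> 'v" +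
  assumes finite_vectors: "finite (UNIV :: 'v set)"

sublocale finite_vector_space \<subseteq> finite_dimensional_vector_space scale "SOME B. independent B \<and> span B = UNIV"
proof -
  let ?B = "SOME B. independent B \<and> span B = UNIV"
  have "\<exists>B. independent B \<and> span B = UNIV"
    using basis_exists[of UNIV] by (metis top.extremum_uniqueI)
  then have "independent ?B \<and> span ?B = UNIV"
    by (rule someI_ex)
  then show "finite_dimensional_vector_space scale ?B"
    by unfold_locales (simp_all add: finite_subset[OF subset_UNIV finite_vectors])
qed

context finite_vector_space
begin

lemma finite_vector_set: "finite (A :: 'v set)"
  using finite_vectors by (rule finite_subset[rotated]) simp

lemma finite_vector_set_family: "finite (F :: 'v set set)"
  using finite_Pow_iff[THEN iffD2, OF finite_vectors] by (rule finite_subset[rotated]) simp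

lemma two_le_card_scalars: "2 \<le> CARD('a)"
proof -
  have "card {0::'a, 1} \<le> CARD('a)"
    by (rule card_mono) simp_all
  then show ?thesis
    by simp
qed

lemma span_insert_eq_image: "span (insert x U) = (\<lambda>(k, u). scale k x + u) ` (UNIV \<times> span U)"
  unfolding span_insert
proof (intro set_eqI iffI)
  fix z
  assume "z \<in> {z. \<exists>k. z - scale k x \<in> span U}"
  then obtain k where "z - scale k x \<in> span U"
    by blast
  then show "z \<in> (\<lambda>(k, u). scale k x + u) ` (UNIV \<times> span U)"
    by (intro image_eqI[of _ _ "(k, z - scale k x)"]) auto
next
  fix z
  assume "z \<in> (\<lambda>(k, u). scale k x + u) ` (UNIV \<times> span U)"
  then obtain k u where "u \<in> span U" "z = scale k x + u"
    by auto
  then show "z \<in> {z. \<exists>k. z - scale k x \<in> span U}"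
    by (auto intro!: exI[of _ k])
qed

lemma card_span_insert:
  assumes "x \<notin> span U"
  shows "card (span (insert x U)) = CARD('a) * card (span U)"
proof -
  have "inj_on (\<lambda>(k, u). scale k x + u) (UNIV \<times> span U)"
  proof (rule inj_onI, clarify)
    fix k u k' u'
    assume u: "u \<in> span U" "u' \<in> span U" and eq: "scale k x + u = scale k' x + u'"
    have "scale k x - scale k' x = u' - u"
      using eq by (simp add: algebra_simps)
    then have in_span: "scale (k - k') x \<in> span U"
      using span_diff[OF u(2,1)] by (simp add: scale_left_diff_distrib)
    have "k = k'"
    proof (rule ccontr)
      assume "k \<noteq> k'"
      then have "scale (inverse (k - k')) (scale (k - k') x) = x"
        by simp
      then show False
        using span_scale[OF in_span, of "inverse (k - k')"] assms by simp
    qed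
    then show "k = k' \<and> u = u'"
      using eq by simp
  qed
  then have "card (span (insert x U)) = card (UNIV \<times> span U :: ('a \<times> 'v) set)"
    unfolding span_insert_eq_image by (rule card_image)
  then show ?thesis
    by (simp add: card_cartesian_product)
qed

lemma card_span_independent: "independent B \<Longrightarrow> card (span B) = CARD('a) ^ card B"
proof (induction B rule: infinite_finite_induct)
  case (infinite B)
  then show ?case
    using finite_vector_set by blast
next
  case (insert x B)
  then show ?case
    by (simp add: independent_insert card_span_insert)
qed simp

lemma card_subspace:
  assumes "subspace S"
  shows "card S = CARD('a) ^ dim S"
proof -
  obtain B where B: "B \<subseteq> S" "independent B" "S \<subseteq> span B" "card B = dim S"
    using basis_exists by blast
  then have "span B = S"
    using span_subspace assms by blast
  then show ?thesis
    using card_span_independent[OF B(2)] B(4) by simp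
qed

lemma nonzero_if_dim_pos:
  assumes "0 < dim S"
  obtains w where "w \<in> S" "w \<noteq> 0"
proof -
  have "\<not> S \<subseteq> {0}"
    using assms by (metis dim_eq_0 less_irrefl)
  then show ?thesis
    using that by blast
qed

lemma span_Un_subset_iff: "subspace B \<Longrightarrow> span (X \<union> Y) \<subseteq> B \<longleftrightarrow> X \<subseteq> B \<and> Y \<subseteq> B"
  using span_superset[of "X \<union> Y"] span_minimal[of "X \<union> Y" B] by auto

lemma dim_span_Un_Int:
  assumes "subspace S" "subspace T"
  shows "dim (span (S \<union> T)) + dim (S \<inter> T) = dim S + dim T"
  using dim_sums_Int[OF assms] by (simp add: span_Un span_eq_iff[THEN iffD2, OF assms(1)]
      span_eq_iff[THEN iffD2, OF assms(2)])

lemma subspaces_of_dim_containing_eq_singleton: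
  assumes "subspace T"
  shows "{B \<in> subspaces_of_dim scale (dim T). T \<subseteq> B} = {T}"
proof (intro equalityI subsetI)
  fix B
  assume "B \<in> {B \<in> subspaces_of_dim scale (dim T). T \<subseteq> B}"
  then show "B \<in> {T}"
    using subspace_dim_equal[of T B] assms unfolding subspaces_of_dim_def by simp
qed (use assms in \<open>simp add: subspaces_of_dim_def\<close>)

lemma card_Diff_eq_mult_card_subspaces_between_plus_1:
  assumes U: "subspace U" and A: "subspace A" and "U \<subseteq> A"
  shows "card (A - U) = (CARD('a) ^ (dim U + 1) - CARD('a) ^ dim U)
           * card {T \<in> subspaces_of_dim scale (dim U + 1). U \<subseteq> T \<and> T \<subseteq> A}"
proof (rule card_eq_mult_card_if_fibres[where f = "\<lambda>x. span (insert x U)"])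
  have dim_span_insert: "dim (span (insert x U)) = dim U + 1" if "x \<notin> U" for x
    using that dim_insert[of x U] span_eq_iff[THEN iffD2, OF U] by simp
  show "(\<lambda>x. span (insert x U)) ` (A - U)
      \<subseteq> {T \<in> subspaces_of_dim scale (dim U + 1). U \<subseteq> T \<and> T \<subseteq> A}"
  proof (rule image_subsetI)
    fix x
    assume "x \<in> A - U"
    then show "span (insert x U) \<in> {T \<in> subspaces_of_dim scale (dim U + 1). U \<subseteq> T \<and> T \<subseteq> A}"
      using A \<open>U \<subseteq> A\<close> dim_span_insert span_superset[of "insert x U"]
        span_minimal[of "insert x U" A] unfolding subspaces_of_dim_def by auto
  qed
  fix T
  assume "T \<in> {T \<in> subspaces_of_dim scale (dim U + 1). U \<subseteq> T \<and> T \<subseteq> A}"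
  then have T: "subspace T" "dim T = dim U + 1" "U \<subseteq> T" "T \<subseteq> A"
    unfolding subspaces_of_dim_def by auto
  have "{x \<in> A - U. span (insert x U) = T} = T - U"
  proof (intro set_eqI iffI)
    fix x
    assume "x \<in> {x \<in> A - U. span (insert x U) = T}"
    then show "x \<in> T - U"
      using span_superset[of "insert x U"] by auto
  next
    fix x
    assume x: "x \<in> T - U"
    then have "span (insert x U) \<subseteq> T"
      using T by (simp add: span_minimal)
    then have "span (insert x U) = T"
      using T dim_span_insert x by (simp add: subspace_dim_equal)
    then show "x \<in> {x \<in> A - U. span (insert x U) = T}"
      using x T by auto
  qed
  then show "card {x \<in> A - U. span (insert x U) = T} = CARD('a) ^ (dim U + 1) - CARD('a) ^ dim U"
    using T U card_subspace card_Diff_subset[OF finite_vector_set T(3)] by simp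
qed (fact finite_vector_set finite_vector_set_family)+

lemma card_subspaces_between_plus_1:
  assumes "subspace U" "subspace A" "U \<subseteq> A"
  shows "real (card {T \<in> subspaces_of_dim scale (dim U + 1). U \<subseteq> T \<and> T \<subseteq> A})
           = gauss_coeff CARD('a) (dim A - dim U) 1"
proof -
  let ?q = "CARD('a)"
  define Y where "Y = {T \<in> subspaces_of_dim scale (dim U + 1). U \<subseteq> T \<and> T \<subseteq> A}"
  have "card (A - U) = (?q ^ (dim U + 1) - ?q ^ dim U) * card Y"
    unfolding Y_def by (rule card_Diff_eq_mult_card_subspaces_between_plus_1[OF assms])
  moreover have "card (A - U) = ?q ^ dim A - ?q ^ dim U"
    using assms card_subspace card_Diff_subset[OF finite_vector_set assms(3)] by simp
  ultimately have "real (card Y) * real (?q ^ (dim U + 1) - ?q ^ dim U) = real (?q ^ dim A - ?q ^ dim U)"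
    by (metis of_nat_mult mult.commute)
  moreover have "dim U \<le> dim A" "1 \<le> ?q"
    using dim_subset[OF assms(3)] two_le_card_scalars by simp_all
  ultimately have "real (card Y) * (real ?q ^ (dim U + 1) - real ?q ^ dim U) = real ?q ^ dim A - real ?q ^ dim U"
    by (simp only: of_nat_diff power_increasing le_add1 of_nat_power)
  moreover have "real ?q ^ (dim U + 1) - real ?q ^ dim U \<noteq> 0"
    using two_le_card_scalars by simp
  ultimately have "real (card Y) = (real ?q ^ dim A - real ?q ^ dim U) / (real ?q ^ (dim U + 1) - real ?q ^ dim U)"
    by (simp add: eq_divide_eq)
  then show ?thesis
    unfolding Y_def gauss_coeff_1_eq_power_quotient[OF two_le_card_scalars \<open>dim U \<le> dim A\<close>] .
qed

lemma card_subspaces_between_plus_2_mult: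
  assumes U: "subspace U" and A: "subspace A" and "U \<subseteq> A"
  shows "real (card {B \<in> subspaces_of_dim scale (dim U + 2). U \<subseteq> B \<and> B \<subseteq> A}) * gauss_coeff CARD('a) 2 1
           = gauss_coeff CARD('a) (dim A - dim U) 1 * gauss_coeff CARD('a) (dim A - dim U - 1) 1"
proof -
  let ?q = "CARD('a)"
  define P where "P = {T \<in> subspaces_of_dim scale (dim U + 1). U \<subseteq> T \<and> T \<subseteq> A}"
  define Q where "Q = {B \<in> subspaces_of_dim scale (dim U + 2). U \<subseteq> B \<and> B \<subseteq> A}"
  have up: "real (card {B \<in> Q. T \<subseteq> B}) = gauss_coeff ?q (dim A - dim U - 1) 1" if "T \<in> P" for T
  proof -
    have T: "subspace T" "dim T = dim U + 1" "U \<subseteq> T" "T \<subseteq> A"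
      using that unfolding P_def subspaces_of_dim_def by auto
    then have "{B \<in> Q. T \<subseteq> B} = {B \<in> subspaces_of_dim scale (dim T + 1). T \<subseteq> B \<and> B \<subseteq> A}"
      unfolding Q_def subspaces_of_dim_def by auto
    then show ?thesis
      using card_subspaces_between_plus_1[OF T(1) A T(4)] T(2) by simp
  qed
  have down: "real (card {T \<in> P. T \<subseteq> B}) = gauss_coeff ?q 2 1" if "B \<in> Q" for B
  proof -
    have B: "subspace B" "dim B = dim U + 2" "U \<subseteq> B" "B \<subseteq> A"
      using that unfolding Q_def subspaces_of_dim_def by auto
    then have "{T \<in> P. T \<subseteq> B} = {T \<in> subspaces_of_dim scale (dim U + 1). U \<subseteq> T \<and> T \<subseteq> B}"
      unfolding P_def by auto
    then show ?thesis
      using card_subspaces_between_plus_1[OF U B(1,3)] B(2) by simp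
  qed
  have "real (card Q) * gauss_coeff ?q 2 1 = (\<Sum>B\<in>Q. real (card {T \<in> P. T \<subseteq> B}))"
    using sum.cong[OF refl down, of Q] by simp
  also have "\<dots> = (\<Sum>T\<in>P. real (card {B \<in> Q. T \<subseteq> B}))"
    using arg_cong[OF sum_card_incidences_swap[where X = P and Y = Q and R = "\<lambda>T B. T \<subseteq> B",
          OF finite_vector_set_family finite_vector_set_family], of real]
    by (simp only: of_nat_sum)
  also have "\<dots> = real (card P) * gauss_coeff ?q (dim A - dim U - 1) 1"
    using sum.cong[OF refl up, of P] by simp
  finally show ?thesis
    unfolding Q_def P_def card_subspaces_between_plus_1[OF assms] .
qed

lemma card_subspaces_between_plus_2:
  assumes "subspace U" "subspace A" "U \<subseteq> A"
  shows "real (card {B \<in> subspaces_of_dim scale (dim U + 2). U \<subseteq> B \<and> B \<subseteq> A})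
           = gauss_coeff CARD('a) (dim A - dim U) 2"
proof -
  have "CARD('a) \<noteq> 1"
    using two_le_card_scalars by simp
  then have "gauss_coeff CARD('a) 2 1 \<noteq> 0"
    using gauss_coeff_2_1[of "CARD('a)"] by simp
  moreover have "real (card {B \<in> subspaces_of_dim scale (dim U + 2). U \<subseteq> B \<and> B \<subseteq> A})
      * gauss_coeff CARD('a) 2 1
      = gauss_coeff CARD('a) (dim A - dim U) 2 * gauss_coeff CARD('a) 2 1"
    using card_subspaces_between_plus_2_mult[OF assms] gauss_coeff_2[OF \<open>CARD('a) \<noteq> 1\<close>, of "dim A - dim U"]
    by (simp add: diff_diff_left)
  ultimately show ?thesis
    by simp
qed

lemma scattered_iff_no_spread_element:
  assumes "G \<subseteq> subspaces_of_dim scale 2"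
  shows "scattered scale G B \<longleftrightarrow> (\<forall>S\<in>G. \<not> S \<subseteq> B)"
proof -
  have "(\<exists>W\<in>subspaces_of_dim scale 2. W \<subseteq> B \<and> (\<exists>S\<in>G. W \<subseteq> S)) \<longleftrightarrow> (\<exists>S\<in>G. S \<subseteq> B)"
  proof
    assume "\<exists>W\<in>subspaces_of_dim scale 2. W \<subseteq> B \<and> (\<exists>S\<in>G. W \<subseteq> S)"
    then obtain W S where "W \<in> subspaces_of_dim scale 2" "W \<subseteq> B" "S \<in> G" "W \<subseteq> S"
      by blast
    moreover from this have "W = S"
      using assms subspace_dim_equal[of W S] unfolding subspaces_of_dim_def by auto
    ultimately show "\<exists>S\<in>G. S \<subseteq> B"
      by blast
  qed (use assms in blast)
  then show ?thesis
    unfolding scattered_def by blast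
qed

end

(* bmul is the scalar multiplication of V over GF(q^2), which contains GF(q) via phi; the prefix
   ext marks GF(q^2)-linear notions, so that the spread consists of the GF(q^2)-points of V. *)
locale desarguesian_spread = finite_vector_space scale + ext: vector_space bmul
  for scale :: "'a::{finite,field} \<Rightarrow> 'v::ab_group_add \<Rightarrow> 'v"
    and bmul :: "'b::{finite,field} \<Rightarrow> 'v \<Rightarrow> 'v" +
  fixes phi :: "'a \<Rightarrow> 'b"
    and G :: "'v set set"
  assumes card_ext_scalars: "CARD('b) = CARD('a) ^ 2"
    and bmul_phi: "bmul (phi a) x = scale a x"
    and spread_eq: "G = {ext.span {w} | w. w \<noteq> 0}"

sublocale desarguesian_spread \<subseteq> ext: finite_vector_space bmul
  by unfold_locales (rule finite_vectors)

lemma is_desarguesian_spreadE: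
  fixes scale :: "'a::{finite,field} \<Rightarrow> 'v::ab_group_add \<Rightarrow> 'v" and phi :: "'a \<Rightarrow> 'b::{finite,field}"
  assumes vs: "vector_space scale" and card: "CARD('b) = CARD('a) ^ 2"
    and desarg: "is_desarguesian_spread phi TYPE('s::finite) scale G"
  obtains bmul where "desarguesian_spread scale bmul phi G"
proof -
  obtain f :: "('s \<Rightarrow> 'b) \<Rightarrow> 'v" where lin: "Vector_Spaces.linear (restr_scale phi) scale f"
    and "bij f" and G: "G = (\<lambda>P. f ` P) ` desarg_spread_std"
    using desarg unfolding is_desarguesian_spread_def by blast
  interpret f: Vector_Spaces.linear "restr_scale phi" scale f
    by (fact lin)
  have f_inv_f: "f (inv f w) = w" for w
    using \<open>bij f\<close> by (simp add: bij_is_surj surj_f_inv_f)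
  define bmul where "bmul c w = f (\<lambda>i. c * inv f w i)" for c w
  have "vector_space (\<lambda>(c::'b) (x::'s \<Rightarrow> 'b) i. c * x i)"
    by unfold_locales (simp_all add: fun_eq_iff algebra_simps)
  from vector_space_transport[OF this \<open>bij f\<close>] f.add
  interpret ext: vector_space bmul
    unfolding bmul_def by simp
  have "finite (UNIV :: 'v set)"
    using bij_is_surj[OF \<open>bij f\<close>] finite_imageI[of "UNIV :: ('s \<Rightarrow> 'b) set" f] by simp
  moreover have "bmul (phi a) w = scale a w" for a w
    using f.scale[of a "inv f w"] unfolding bmul_def restr_scale_def f_inv_f .
  moreover have "G = {ext.span {w} | w. w \<noteq> 0}"
    unfolding G image_desarg_spread_std[OF \<open>bij f\<close> f.add] by (simp add: ext.span_singleton bmul_def)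
  ultimately have "desarguesian_spread scale bmul phi G"
    by (intro desarguesian_spread.intro finite_vector_space.intro finite_vector_space_axioms.intro
        desarguesian_spread_axioms.intro vs ext.vector_space_axioms card)
  then show thesis
    by (rule that)
qed

context desarguesian_spread
begin

lemma subspace_if_ext_subspace: "ext.subspace X \<Longrightarrow> subspace X"
  unfolding subspace_def ext.subspace_def by (metis bmul_phi)

lemma span_subset_ext_span: "span X \<subseteq> ext.span X"
  by (rule span_minimal[OF ext.span_superset subspace_if_ext_subspace[OF ext.subspace_span]])

lemma dim_ext_subspace:
  assumes "ext.subspace X"
  shows "dim X = 2 * ext.dim X"
proof -
  have "CARD('a) ^ dim X = CARD('a) ^ (2 * ext.dim X)"
    using card_subspace[OF subspace_if_ext_subspace[OF assms]] ext.card_subspace[OF assms]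
    by (simp add: card_ext_scalars power_mult)
  then show ?thesis
    using two_le_card_scalars by (simp add: power_inject_exp)
qed

lemma ext_dim_le_dim: "ext.dim X \<le> dim X"
proof -
  obtain B where B: "B \<subseteq> X" "independent B" "X \<subseteq> span B" "card B = dim X"
    using basis_exists by blast
  then have "X \<subseteq> ext.span B"
    using span_subset_ext_span by blast
  then show ?thesis
    using ext.dim_le_card[OF _ finite_vector_set[of B]] B(4) by simp
qed

lemma spread_iff: "S \<in> G \<longleftrightarrow> ext.subspace S \<and> ext.dim S = 1"
proof
  assume "S \<in> G"
  then show "ext.subspace S \<and> ext.dim S = 1"
    unfolding spread_eq by auto
next
  assume S: "ext.subspace S \<and> ext.dim S = 1"
  obtain B where B: "B \<subseteq> S" "ext.independent B" "S \<subseteq> ext.span B" "card B = 1"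
    using ext.basis_exists[of S] S by auto
  then obtain w where "B = {w}"
    by (auto simp: card_Suc_eq)
  then have "S = ext.span {w}" "w \<noteq> 0"
    using B S ext.span_subspace[of B S] ext.dependent_zero[of B] by auto
  then show "S \<in> G"
    unfolding spread_eq by blast
qed

lemma spread_subspaces_of_dim_2: "G \<subseteq> subspaces_of_dim scale 2"
  using spread_iff subspace_if_ext_subspace dim_ext_subspace unfolding subspaces_of_dim_def by auto

lemma spread_subspace: "S \<in> G \<Longrightarrow> subspace S"
  and dim_spread: "S \<in> G \<Longrightarrow> dim S = 2"
  using spread_subspaces_of_dim_2 unfolding subspaces_of_dim_def by auto

lemma spread_eq_ext_span:
  assumes "S \<in> G" "w \<in> S" "w \<noteq> 0"
  shows "S = ext.span {w}"
  using assms spread_iff ext.subspace_dim_equal[of "ext.span {w}" S] ext.span_minimal[of "{w}" S]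
  by simp

lemma spread_disjoint:
  assumes "S \<in> G" "S' \<in> G" "S \<noteq> S'"
  shows "S \<inter> S' = {0}"
proof -
  have "w = 0" if "w \<in> S" "w \<in> S'" for w
    using spread_eq_ext_span[OF assms(1)] spread_eq_ext_span[OF assms(2)] assms(3) that by metis
  then show ?thesis
    using subspace_0[OF spread_subspace[OF assms(1)]] subspace_0[OF spread_subspace[OF assms(2)]] by blast
qed

lemma card_spread_within:
  assumes "ext.subspace X"
  shows "real (card {S \<in> G. S \<subseteq> X}) = gauss_coeff CARD('a) (dim X) 1 / gauss_coeff CARD('a) 2 1"
proof -
  have "{S \<in> G. S \<subseteq> X} = {S \<in> subspaces_of_dim bmul (ext.dim {0} + 1). {0} \<subseteq> S \<and> S \<subseteq> X}"
    using spread_iff ext.subspace_0 unfolding subspaces_of_dim_def by auto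
  then have "real (card {S \<in> G. S \<subseteq> X}) = gauss_coeff (CARD('a) ^ 2) (ext.dim X) 1"
    using ext.card_subspaces_between_plus_1[OF ext.subspace_single_0 assms] ext.subspace_0[OF assms]
    by (simp add: card_ext_scalars)
  then show ?thesis
    using gauss_coeff_square_base two_le_card_scalars dim_ext_subspace[OF assms] by simp
qed

lemma span_Un_spread_eq_ext_span:
  assumes "S \<in> G" "S' \<in> G"
  shows "span (S \<union> S') = ext.span (S \<union> S')"
proof -
  have "ext.subspace S" "ext.subspace S'" "subspace S" "subspace S'"
    using assms spread_iff subspace_if_ext_subspace by auto
  then show ?thesis
    by (simp add: span_Un ext.span_Un span_eq_iff[THEN iffD2] ext.span_eq_iff[THEN iffD2])
qed

lemma ext_subspace_if_two_spread_elements: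
  assumes B: "B \<in> subspaces_of_dim scale 4"
    and S: "S \<in> G" "S' \<in> G" "S \<noteq> S'" "S \<subseteq> B" "S' \<subseteq> B"
  shows "ext.subspace B"
proof -
  have "dim (span (S \<union> S')) = 4"
    using dim_span_Un_Int[OF spread_subspace[OF S(1)] spread_subspace[OF S(2)]]
      dim_spread[OF S(1)] dim_spread[OF S(2)] spread_disjoint[OF S(1-3)] by simp
  moreover have "span (S \<union> S') \<subseteq> B"
    using B S(4,5) span_Un_subset_iff[of B S S'] unfolding subspaces_of_dim_def by auto
  ultimately have "span (S \<union> S') = B"
    using B subspace_dim_equal[of "span (S \<union> S')" B] subspace_span[of "S \<union> S'"]
    unfolding subspaces_of_dim_def by auto
  then show ?thesis
    using span_Un_spread_eq_ext_span[OF S(1,2)] ext.subspace_span by metis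
qed

context
  fixes L :: "'v set"
  assumes line: "L \<in> subspaces_of_dim scale 2"
    and line_not_in_spread: "\<forall>S\<in>G. \<not> L \<subseteq> S"
begin

lemma line_subspace: "subspace L"
  and dim_line: "dim L = 2"
  using line unfolding subspaces_of_dim_def by auto

lemma ext_dim_ext_span_line: "ext.dim (ext.span L) = 2"
proof -
  have "ext.dim (ext.span L) \<le> 2"
    using ext_dim_le_dim[of L] dim_line by simp
  moreover have "ext.dim (ext.span L) \<noteq> 0"
    using ext.span_superset[of L] dim_line dim_eq_0[of L] by auto
  moreover have "ext.dim (ext.span L) \<noteq> 1"
    using spread_iff[of "ext.span L"] line_not_in_spread ext.span_superset[of L] by auto
  ultimately show ?thesis
    by linarith
qed

lemma ext_span_line_in_four_spaces: "ext.span L \<in> subspaces_of_dim scale 4"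
  using subspace_if_ext_subspace[OF ext.subspace_span] dim_ext_subspace[OF ext.subspace_span]
    ext_dim_ext_span_line unfolding subspaces_of_dim_def by simp

lemma four_space_eq_ext_span_line:
  assumes B: "B \<in> subspaces_of_dim scale 4" "L \<subseteq> B"
    and S: "S \<in> G" "S' \<in> G" "S \<noteq> S'" "S \<subseteq> B" "S' \<subseteq> B"
  shows "B = ext.span L"
proof -
  have "ext.span L \<subseteq> B"
    using ext_subspace_if_two_spread_elements[OF B(1) S] B(2) ext.span_minimal by blast
  then show ?thesis
    using B(1) ext_span_line_in_four_spaces subspace_dim_equal[of "ext.span L" B]
    unfolding subspaces_of_dim_def by simp
qed

lemma spread_element_in_ext_span_line: "\<exists>S\<in>G. S \<subseteq> ext.span L"
proof -
  obtain w where "w \<in> L" "w \<noteq> 0"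
    by (rule nonzero_if_dim_pos[of L]) (simp add: dim_line)
  then show ?thesis
    unfolding spread_eq using ext.span_mono[of "{w}" L] by blast
qed

lemma dim_spread_Int_line_le_1:
  assumes "S \<in> G"
  shows "dim (S \<inter> L) \<le> 1"
proof (rule ccontr)
  assume "\<not> dim (S \<inter> L) \<le> 1"
  then have "S \<inter> L = L"
    using subspace_dim_equal[of "S \<inter> L" L] subspace_inter[OF spread_subspace[OF assms] line_subspace]
      line_subspace dim_line by simp
  then show False
    using line_not_in_spread assms by blast
qed

lemma nonzero_in_spread_Int_line:
  assumes "S \<in> G" "S \<inter> L \<noteq> {0}"
  obtains w where "w \<in> S" "w \<in> L" "w \<noteq> 0"
proof -
  have "0 \<in> S \<inter> L"
    using subspace_0[OF spread_subspace[OF assms(1)]] subspace_0[OF line_subspace] by simp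
  then have "\<not> S \<inter> L \<subseteq> {0}"
    using assms(2) by auto
  then show ?thesis
    using that by blast
qed

lemma dim_spread_Int_line_eq_1:
  assumes "S \<in> G" "S \<inter> L \<noteq> {0}"
  shows "dim (S \<inter> L) = 1"
proof -
  obtain w where "w \<in> S" "w \<in> L" "w \<noteq> 0"
    using nonzero_in_spread_Int_line[OF assms] .
  then have "dim (S \<inter> L) \<noteq> 0"
    by auto
  then show ?thesis
    using dim_spread_Int_line_le_1[OF assms(1)] by linarith
qed

lemma spread_subset_ext_span_line_if_meets_line:
  assumes "S \<in> G" "S \<inter> L \<noteq> {0}"
  shows "S \<subseteq> ext.span L"
proof -
  obtain w where "w \<in> S" "w \<in> L" "w \<noteq> 0"
    using nonzero_in_spread_Int_line[OF assms] .
  then show ?thesis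
    using spread_eq_ext_span[OF assms(1)] ext.span_mono[of "{w}" L] by auto
qed

lemma point_of_line_eq_spread_Int_line:
  assumes "P \<in> subspaces_of_dim scale 1" "P \<subseteq> L"
  obtains S where "S \<in> G" "S \<inter> L \<noteq> {0}" "P = S \<inter> L"
proof -
  have P: "subspace P" "dim P = 1"
    using assms(1) unfolding subspaces_of_dim_def by auto
  obtain w where w: "w \<in> P" "w \<noteq> 0"
    by (rule nonzero_if_dim_pos[of P]) (simp add: P(2))
  let ?S = "ext.span {w}"
  have "?S \<in> G"
    unfolding spread_eq using w(2) by blast
  have "span {w} = P"
    using P w subspace_dim_equal[of "span {w}" P] span_minimal[of "{w}" P] by simp
  then have "P \<subseteq> ?S \<inter> L"
    using span_subset_ext_span assms(2) by blast
  then have "P = ?S \<inter> L"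
    using subspace_dim_equal[OF P(1) subspace_inter[OF spread_subspace[OF \<open>?S \<in> G\<close>] line_subspace]]
      dim_spread_Int_line_le_1[OF \<open>?S \<in> G\<close>] P(2) by simp
  moreover have "?S \<inter> L \<noteq> {0}"
    using \<open>P \<subseteq> ?S \<inter> L\<close> w by auto
  ultimately show ?thesis
    using that \<open>?S \<in> G\<close> by blast
qed

lemma card_spread_meeting_line: "real (card {S \<in> G. S \<inter> L \<noteq> {0}}) = gauss_coeff CARD('a) 2 1"
proof -
  let ?Y = "{S \<in> G. S \<inter> L \<noteq> {0}}"
  let ?P = "{P \<in> subspaces_of_dim scale (dim {0} + 1). {0} \<subseteq> P \<and> P \<subseteq> L}"
  have "bij_betw (\<lambda>S. S \<inter> L) ?Y ?P"
  proof (rule bij_betw_imageI)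
    show "inj_on (\<lambda>S. S \<inter> L) ?Y"
    proof (rule inj_onI)
      fix S S'
      assume S: "S \<in> ?Y" and S': "S' \<in> ?Y" and eq: "S \<inter> L = S' \<inter> L"
      obtain w where "w \<in> S" "w \<in> L" "w \<noteq> 0"
        using nonzero_in_spread_Int_line S by blast
      then show "S = S'"
        using spread_eq_ext_span S S' eq by blast
    qed
    show "(\<lambda>S. S \<inter> L) ` ?Y = ?P"
    proof (intro equalityI subsetI)
      fix P
      assume "P \<in> (\<lambda>S. S \<inter> L) ` ?Y"
      then obtain S where S: "S \<in> G" "S \<inter> L \<noteq> {0}" and P: "P = S \<inter> L"
        by blast
      have "subspace P"
        unfolding P by (rule subspace_inter[OF spread_subspace[OF S(1)] line_subspace])
      then show "P \<in> ?P"
        using dim_spread_Int_line_eq_1[OF S] subspace_0 unfolding P subspaces_of_dim_def by auto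
    next
      fix P
      assume "P \<in> ?P"
      then obtain S where "S \<in> G" "S \<inter> L \<noteq> {0}" "P = S \<inter> L"
        using point_of_line_eq_spread_Int_line by auto
      then show "P \<in> (\<lambda>S. S \<inter> L) ` ?Y"
        by blast
    qed
  qed
  then have "card ?Y = card ?P"
    by (rule bij_betw_same_card)
  then show ?thesis
    using card_subspaces_between_plus_1[OF subspace_single_0 line_subspace] subspace_0[OF line_subspace]
      dim_line by simp
qed

lemma four_spaces_through_line_and_spread_eq:
  "{B \<in> subspaces_of_dim scale 4. L \<subseteq> B \<and> S \<subseteq> B}
     = {B \<in> subspaces_of_dim scale 4. span (L \<union> S) \<subseteq> B}"
proof -
  have "B \<in> subspaces_of_dim scale 4 \<and> L \<subseteq> B \<and> S \<subseteq> B
      \<longleftrightarrow> B \<in> subspaces_of_dim scale 4 \<and> span (L \<union> S) \<subseteq> B" for B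
    using span_Un_subset_iff[of B L S] unfolding subspaces_of_dim_def by auto
  then show ?thesis
    by simp
qed

lemma card_four_spaces_through_line_and_disjoint_spread:
  assumes "S \<in> G" "S \<inter> L = {0}"
  shows "card ({B \<in> subspaces_of_dim scale 4. L \<subseteq> B \<and> S \<subseteq> B} - {ext.span L})
           = (if S \<subseteq> ext.span L then 0 else 1)"
proof -
  let ?T = "span (L \<union> S)"
  have "dim ?T = 4"
    using dim_span_Un_Int[OF line_subspace spread_subspace[OF assms(1)]] dim_line dim_spread[OF assms(1)]
      assms(2) by (simp add: Int_commute)
  then have four_spaces: "{B \<in> subspaces_of_dim scale 4. L \<subseteq> B \<and> S \<subseteq> B} = {?T}"
    using subspaces_of_dim_containing_eq_singleton[OF subspace_span, of "L \<union> S"]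
    unfolding four_spaces_through_line_and_spread_eq by simp
  have "?T = ext.span L \<longleftrightarrow> S \<subseteq> ext.span L"
  proof
    assume "S \<subseteq> ext.span L"
    then have "?T \<subseteq> ext.span L"
      using ext.span_superset[of L] subspace_if_ext_subspace[OF ext.subspace_span] span_Un_subset_iff
      by blast
    then show "?T = ext.span L"
      using \<open>dim ?T = 4\<close> ext_span_line_in_four_spaces subspace_dim_equal[of ?T "ext.span L"]
      unfolding subspaces_of_dim_def by simp
  next
    assume "?T = ext.span L"
    then show "S \<subseteq> ext.span L"
      using span_superset[of "L \<union> S"] by blast
  qed
  then show ?thesis
    unfolding four_spaces by (cases "S \<subseteq> ext.span L") simp_all
qed

lemma card_four_spaces_through_line_and_meeting_spread:
  assumes "S \<in> G" "S \<inter> L \<noteq> {0}"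
  shows "real (card ({B \<in> subspaces_of_dim scale 4. L \<subseteq> B \<and> S \<subseteq> B} - {ext.span L}))
           = real CARD('a) * gauss_coeff CARD('a) (dim UNIV - 4) 1"
proof -
  let ?T = "span (L \<union> S)"
  let ?F = "{B \<in> subspaces_of_dim scale 4. L \<subseteq> B \<and> S \<subseteq> B}"
  have "dim ?T = 3"
    using dim_span_Un_Int[OF line_subspace spread_subspace[OF assms(1)]] dim_line dim_spread[OF assms(1)]
      dim_spread_Int_line_eq_1[OF assms] by (simp add: Int_commute)
  then have "?F = {B \<in> subspaces_of_dim scale (dim ?T + 1). ?T \<subseteq> B \<and> B \<subseteq> UNIV}"
    unfolding four_spaces_through_line_and_spread_eq by simp
  then have "real (card ?F) = gauss_coeff CARD('a) (dim UNIV - 3) 1"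
    using card_subspaces_between_plus_1[OF subspace_span subspace_UNIV subset_UNIV, of "L \<union> S"]
      \<open>dim ?T = 3\<close> by simp
  moreover have "ext.span L \<in> ?F"
    using ext_span_line_in_four_spaces ext.span_superset[of L]
      spread_subset_ext_span_line_if_meets_line[OF assms] by simp
  then have "card ?F = Suc (card (?F - {ext.span L}))"
    by (rule card.remove[OF finite_vector_set_family])
  moreover have "dim UNIV - 3 = Suc (dim UNIV - 4)"
    using dim_subset[of "ext.span L" UNIV] ext_span_line_in_four_spaces
    unfolding subspaces_of_dim_def by simp
  ultimately show ?thesis
    using gauss_coeff_Suc_1[of "CARD('a)" "dim UNIV - 4"] two_le_card_scalars by simp
qed

lemma card_four_spaces_through_line_and_spread:
  assumes "S \<in> G"
  shows "real (card ({B \<in> subspaces_of_dim scale 4. L \<subseteq> B \<and> S \<subseteq> B} - {ext.span L}))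
           = (if S \<inter> L \<noteq> {0} then real CARD('a) * gauss_coeff CARD('a) (dim UNIV - 4) 1 else 0)
             + (if \<not> S \<subseteq> ext.span L then 1 else 0)"
proof (cases "S \<inter> L = {0}")
  case True
  then show ?thesis
    using card_four_spaces_through_line_and_disjoint_spread[OF assms] by simp
next
  case False
  then show ?thesis
    using card_four_spaces_through_line_and_meeting_spread[OF assms]
      spread_subset_ext_span_line_if_meets_line[OF assms] by simp
qed

lemma card_nonscattered_four_spaces_through_line_eq_sum:
  "card {B \<in> subspaces_of_dim scale 4. L \<subseteq> B \<and> (\<exists>S\<in>G. S \<subseteq> B)}
     = 1 + (\<Sum>S\<in>G. card ({B \<in> subspaces_of_dim scale 4. L \<subseteq> B \<and> S \<subseteq> B} - {ext.span L}))"
proof -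
  let ?C = "\<lambda>S. {B \<in> subspaces_of_dim scale 4. L \<subseteq> B \<and> S \<subseteq> B} - {ext.span L}"
  have partition: "{B \<in> subspaces_of_dim scale 4. L \<subseteq> B \<and> (\<exists>S\<in>G. S \<subseteq> B)}
      = insert (ext.span L) (\<Union>S\<in>G. ?C S)"
    using ext_span_line_in_four_spaces spread_element_in_ext_span_line ext.span_superset[of L] by auto
  have not_in: "ext.span L \<notin> (\<Union>S\<in>G. ?C S)"
    by blast
  have "card (\<Union>S\<in>G. ?C S) = (\<Sum>S\<in>G. card (?C S))"
  proof (rule card_UN_disjoint)
    show "\<forall>S\<in>G. \<forall>S'\<in>G. S \<noteq> S' \<longrightarrow> ?C S \<inter> ?C S' = {}"
      using four_space_eq_ext_span_line by blast
  qed (simp_all add: finite_vector_set_family)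
  then show ?thesis
    unfolding partition card_insert_disjoint[OF finite_vector_set_family not_in] by simp
qed

lemma card_nonscattered_four_spaces_through_line:
  "real (card {B \<in> subspaces_of_dim scale 4. L \<subseteq> B \<and> (\<exists>S\<in>G. S \<subseteq> B)})
     = 1 + real (card {S \<in> G. S \<inter> L \<noteq> {0}}) * (real CARD('a) * gauss_coeff CARD('a) (dim UNIV - 4) 1)
         + (real (card G) - real (card {S \<in> G. S \<subseteq> ext.span L}))"
proof -
  have "{S \<in> G. \<not> S \<subseteq> ext.span L} = G - {S \<in> G. S \<subseteq> ext.span L}"
    by blast
  then have "real (card {S \<in> G. \<not> S \<subseteq> ext.span L})
      = real (card G) - real (card {S \<in> G. S \<subseteq> ext.span L})"
    by (simp add: card_Diff_subset of_nat_diff card_mono finite_vector_set_family)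
  then show ?thesis
    unfolding card_nonscattered_four_spaces_through_line_eq_sum
    by (simp add: card_four_spaces_through_line_and_spread sum.distrib sum.inter_filter[symmetric]
        finite_vector_set_family)
qed

lemma card_scattered_four_spaces_through_line:
  "real (card {B \<in> subspaces_of_dim scale 4. L \<subseteq> B \<and> scattered scale G B}) =
     gauss_coeff CARD('a) (dim UNIV - 2) 2 - 1
     - real CARD('a) * gauss_coeff CARD('a) 2 1 * gauss_coeff CARD('a) (dim UNIV - 4) 1
     - gauss_coeff CARD('a) (dim UNIV) 1 / gauss_coeff CARD('a) 2 1
     + gauss_coeff CARD('a) 4 1 / gauss_coeff CARD('a) 2 1"
proof -
  let ?four = "{B \<in> subspaces_of_dim scale 4. L \<subseteq> B}"
  let ?nonscattered = "{B \<in> subspaces_of_dim scale 4. L \<subseteq> B \<and> (\<exists>S\<in>G. S \<subseteq> B)}"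
  have "{B \<in> subspaces_of_dim scale 4. L \<subseteq> B \<and> scattered scale G B} = ?four - ?nonscattered"
    using scattered_iff_no_spread_element[OF spread_subspaces_of_dim_2] by auto
  then have "real (card {B \<in> subspaces_of_dim scale 4. L \<subseteq> B \<and> scattered scale G B})
      = real (card ?four) - real (card ?nonscattered)"
    by (simp add: card_Diff_subset finite_vector_set_family card_mono of_nat_diff subset_iff)
  moreover have "real (card ?four) = gauss_coeff CARD('a) (dim UNIV - 2) 2"
    using card_subspaces_between_plus_2[OF line_subspace subspace_UNIV subset_UNIV] dim_line by simp
  moreover have "real (card G) = gauss_coeff CARD('a) (dim UNIV) 1 / gauss_coeff CARD('a) 2 1"
    using card_spread_within[OF ext.subspace_UNIV] by simp
  moreover have "real (card {S \<in> G. S \<subseteq> ext.span L}) = gauss_coeff CARD('a) 4 1 / gauss_coeff CARD('a) 2 1"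
    using card_spread_within[OF ext.subspace_span] ext_span_line_in_four_spaces
    unfolding subspaces_of_dim_def by simp
  ultimately show ?thesis
    using card_nonscattered_four_spaces_through_line card_spread_meeting_line by (simp add: algebra_simps)
qed

end

end

theorem lemma4:
  fixes scale :: "'a::{finite,field} \<Rightarrow> 'v::ab_group_add \<Rightarrow> 'v"
    and phi :: "'a \<Rightarrow> 'b::{finite,field}"
    and G :: "'v set set"
    and L :: "'v set"
    and q s v :: nat
  assumes q_def: "q = CARD('a)"
    and b_card: "CARD('b) = q ^ 2"
    and phi: "field_emb phi"
    and s_def: "s = CARD('s::finite)"
    and s_ge: "s \<ge> 2"
    and v_def: "v = 2 * s"
    and vs: "vector_space scale"
    and dimV: "vector_space.dim scale (UNIV :: 'v set) = v"
    and spread: "is_1_spread scale G"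
    and desarg: "is_desarguesian_spread phi TYPE('s) scale G"
    and L: "L \<in> subspaces_of_dim scale 2"
    and L_not: "\<forall>S \<in> G. \<not> L \<subseteq> S"
  shows "real (card {B \<in> subspaces_of_dim scale 4. L \<subseteq> B \<and> scattered scale G B}) =
           gauss_coeff q (v - 2) 2 - 1 - real q * gauss_coeff q 2 1 * gauss_coeff q (v - 4) 1
           - gauss_coeff q v 1 / gauss_coeff q 2 1 + gauss_coeff q 4 1 / gauss_coeff q 2 1"
proof -
  obtain bmul where "desarguesian_spread scale bmul phi G"
    using is_desarguesian_spreadE[OF vs b_card[unfolded q_def] desarg] .
  then interpret desarguesian_spread scale bmul phi G .
  show ?thesis
    using card_scattered_four_spaces_through_line[OF L L_not] unfolding q_def dimV[symmetric] .
qed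

end
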